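(* Let $a>0$, $\mu\in(0,1]$, $\phi\in\mathscr A(a,\mu)$ and $b\ge1$. Then for every local stable leaf $\gamma$ and all $\rho_1,\rho_2\in\mathcal D(a,\mu,\gamma)$, $$\frac{\int_\gamma\phi\rho_1}{\int_\gamma\phi\rho_2}\le e^{b\,\theta_a(\rho_1,\rho_2)}\,\frac{\int_\gamma\rho_1}{\int_\gamma\rho_2}.$$
   Context: Local stable leaves $\gamma$ are the local stable manifolds of points of a uniformly hyperbolic set $\Lambda$ of a $C^2$ diffeomorphism $f$ of a compact Riemannian manifold (embedded disks with induced Riemannian measure $m_\gamma$); $\int_\gamma\phi\rho:=\int_\gamma\phi\rho\,dm_\gamma$; $d$ is the Riemannian distance, with $d\le1$ on the relevant domain $Q$. $\mathcal D(a,\mu,\gamma):=\{\rho:\gamma\to\mathbb R:\ \rho>0,\ \rho(x)\le\rho(y)e^{a d(x,y)^\mu}\ \forall x,y\in\gamma\}$ and $\mathscr A(a,\mu):=\{\phi:Q\to\mathbb R:\ \int_\gamma\phi\rho>0$ for every local stable leaf $\gamma$ and every $\rho\in\mathcal D(a,\mu,\gamma)\}$. Hilbert projective metric of a convex cone $C$: write $v\preceq w$ if $w-v\in C\cup\{0\}$; $\alpha(v_1,v_2):=\sup\{t>0: tv_1\preceq v_2\}$, $\beta(v_1,v_2):=\inf\{s>0: v_2\preceq sv_1\}$, $\theta(v_1,v_2):=\log(\beta/\alpha)$ (with value $+\infty$ if $\alpha=0$ or $\beta=\infty$). $\theta_a$ denotes the Hilbert projective metric of the cone $\mathcal D(a,\mu,\gamma)$.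 *)

theory Defs
  imports "HOL-Analysis.Analysis"
begin

text \<open>Integral over a leaf: \<open>\<integral>\<^sub>\<gamma> f\<close> is the integral of f with respect to the
  leaf measure \<open>m \<gamma>\<close> (the induced Riemannian measure on \<gamma>).\<close>

definition leaf_int :: "('a set \<Rightarrow> 'a measure) \<Rightarrow> 'a set \<Rightarrow> ('a \<Rightarrow> real) \<Rightarrow> real" where
  "leaf_int m \<gamma> f = (\<integral>x. f x \<partial>(m \<gamma>))"

text \<open>The cone D(a,mu,gamma); a density on gamma is represented by a function on the
  ambient type whose values outside gamma are irrelevant.\<close>

definition cone_D :: "real \<Rightarrow> real \<Rightarrow> ('a::metric_space) set \<Rightarrow> ('a \<Rightarrow> real) set" where
  "cone_D a \<mu> \<gamma> = {\<rho>. (\<forall>x\<in>\<gamma>. \<rho> x > 0) \<and>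
      (\<forall>x\<in>\<gamma>. \<forall>y\<in>\<gamma>. \<rho> x \<le> \<rho> y * exp (a * dist x y powr \<mu>))}"

definition class_A :: "'a set set \<Rightarrow> ('a set \<Rightarrow> 'a measure) \<Rightarrow> real \<Rightarrow> real
    \<Rightarrow> (('a::metric_space) \<Rightarrow> real) set" where
  "class_A Leaves m a \<mu> = {\<phi>. \<forall>\<gamma>\<in>Leaves. \<forall>\<rho>\<in>cone_D a \<mu> \<gamma>.
       leaf_int m \<gamma> (\<lambda>x. \<phi> x * \<rho> x) > 0}"

definition cone_le :: "'a set \<Rightarrow> ('a \<Rightarrow> real) set \<Rightarrow> ('a \<Rightarrow> real) \<Rightarrow> ('a \<Rightarrow> real) \<Rightarrow> bool" where
  "cone_le S C v w \<longleftrightarrow> (\<forall>x\<in>S. w x - v x = 0) \<or> (\<lambda>x. w x - v x) \<in> C"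

text \<open>Hilbert projective metric, with value \<infinity> when alpha = 0 (no admissible t)
  or beta = \<infinity> (no admissible s).\<close>

definition hilbert_theta :: "'a set \<Rightarrow> ('a \<Rightarrow> real) set \<Rightarrow> ('a \<Rightarrow> real) \<Rightarrow> ('a \<Rightarrow> real) \<Rightarrow> ereal" where
  "hilbert_theta S C v1 v2 =
     (let A = {t::real. t > 0 \<and> cone_le S C (\<lambda>x. t * v1 x) v2};
          B = {s::real. s > 0 \<and> cone_le S C v2 (\<lambda>x. s * v1 x)}
      in if A = {} \<or> B = {} then \<infinity> else ereal (ln (Inf B / Sup A)))"

end

theory Submission
  imports Defs
begin

text \<open>Both functionals \<open>\<rho> \<mapsto> \<integral>\<^sub>\<gamma> \<phi>\<rho>\<close> and \<open>\<rho> \<mapsto> \<integral>\<^sub>\<gamma> \<rho>\<close> are linear and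
  positive on the cone, hence monotone for its order. So \<open>t\<rho>\<^sub>1 \<preceq> \<rho>\<^sub>2 \<preceq> s\<rho>\<^sub>1\<close> gives
  \<open>t \<le> \<integral>\<^sub>\<gamma> \<phi>\<rho>\<^sub>2 / \<integral>\<^sub>\<gamma> \<phi>\<rho>\<^sub>1\<close> and \<open>\<integral>\<^sub>\<gamma> \<rho>\<^sub>2 / \<integral>\<^sub>\<gamma> \<rho>\<^sub>1 \<le> s\<close>; multiplying and optimising
  over \<open>t\<close> and \<open>s\<close> bounds the left-hand ratio by \<open>e\<^bsup>\<theta>\<^esup>\<close> times the right-hand one, and
  \<open>e\<^bsup>\<theta>\<^esup> \<le> e\<^bsup>b\<theta>\<^esup>\<close> because \<open>\<theta> \<ge> 0\<close>. The Hoelder bound in the cone only serves to make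
  its densities continuous, hence integrable with positive integral on a compact leaf.\<close>

lemma cone_D_continuous_on:
  assumes "\<rho> \<in> cone_D a \<mu> \<gamma>" "0 < \<mu>"
  shows "continuous_on \<gamma> \<rho>"
  unfolding continuous_on_def
proof (intro ballI)
  fix y assume y: "y \<in> \<gamma>"
  define e where "e x = exp (a * dist x y powr \<mu>)" for x
  have sandwich: "\<rho> y / e x \<le> \<rho> x \<and> \<rho> x \<le> \<rho> y * e x" if x: "x \<in> \<gamma>" for x
    using assms(1) x y unfolding cone_D_def e_def by (auto simp: dist_commute divide_le_eq)
  have "((\<lambda>x. dist x y powr \<mu>) \<longlongrightarrow> dist y y powr \<mu>) (at y within \<gamma>)"
    using assms(2) by (intro tendsto_intros) auto
  then have "(e \<longlongrightarrow> 1) (at y within \<gamma>)"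
    unfolding e_def using assms(2) by (auto intro!: tendsto_eq_intros)
  then have "((\<lambda>x. \<rho> y / e x) \<longlongrightarrow> \<rho> y) (at y within \<gamma>)" "((\<lambda>x. \<rho> y * e x) \<longlongrightarrow> \<rho> y) (at y within \<gamma>)"
    by (auto intro!: tendsto_eq_intros)
  then show "(\<rho> \<longlongrightarrow> \<rho> y) (at y within \<gamma>)"
    by (rule tendsto_sandwich[rotated 2]) (use sandwich in \<open>auto simp: eventually_at_filter\<close>)
qed

lemma integrable_continuous_on_compact:
  fixes f :: "'a::metric_space \<Rightarrow> real"
  assumes "finite_measure M"
    and sets: "sets M = sets (restrict_space borel K)"
    and "compact K" "continuous_on K f"
  shows "integrable M f"
proof -
  interpret finite_measure M by fact
  have space: "space M = K"
    using sets_eq_imp_space_eq[OF sets] by (simp add: space_restrict_space)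
  have "f \<in> borel_measurable M"
    using borel_measurable_continuous_on_restrict[OF assms(4)] measurable_cong_sets[OF sets refl] by blast
  moreover obtain B where "\<forall>x\<in>K. norm (f x) \<le> B"
    using compact_continuous_image[OF assms(4,3)] compact_imp_bounded bounded_iff by (metis imageI)
  ultimately show ?thesis
    using space by (intro integrable_const_bound[where B=B]) auto
qed

lemma integral_cone_D_pos:
  assumes "finite_measure M"
    and sets: "sets M = sets (restrict_space borel \<gamma>)"
    and "compact \<gamma>" "emeasure M \<gamma> > 0" "0 < \<mu>"
    and \<rho>: "\<rho> \<in> cone_D a \<mu> \<gamma>"
  shows "integrable M \<rho> \<and> integral\<^sup>L M \<rho> > 0"
proof -
  interpret finite_measure M by fact
  have space: "space M = \<gamma>"
    using sets_eq_imp_space_eq[OF sets] by (simp add: space_restrict_space)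
  have int: "integrable M \<rho>"
    using integrable_continuous_on_compact[OF assms(1) sets] cone_D_continuous_on assms by blast
  have "integral\<^sup>L M (\<lambda>_. 0) < integral\<^sup>L M \<rho>"
    using \<rho> assms(4) space int unfolding cone_D_def by (intro integral_less_AE_space) auto
  with int show ?thesis by simp
qed

lemma integral_mono_cone_le:
  fixes g v w :: "'a \<Rightarrow> real"
  assumes "space M = S"
    and "integrable M (\<lambda>x. g x * v x)" "integrable M (\<lambda>x. g x * w x)"
    and pos: "\<forall>\<sigma>\<in>C. integral\<^sup>L M (\<lambda>x. g x * \<sigma> x) > 0"
    and "cone_le S C v w"
  shows "integral\<^sup>L M (\<lambda>x. g x * v x) \<le> integral\<^sup>L M (\<lambda>x. g x * w x)"
proof -
  have diff: "integral\<^sup>L M (\<lambda>x. g x * (w x - v x))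
      = integral\<^sup>L M (\<lambda>x. g x * w x) - integral\<^sup>L M (\<lambda>x. g x * v x)"
    using assms(2,3) by (simp add: right_diff_distrib)
  from \<open>cone_le S C v w\<close> consider "\<forall>x\<in>S. w x - v x = 0" | "(\<lambda>x. w x - v x) \<in> C"
    unfolding cone_le_def by blast
  then show ?thesis
  proof cases
    case 1
    then have "integral\<^sup>L M (\<lambda>x. g x * (w x - v x)) = integral\<^sup>L M (\<lambda>_. 0)"
      using \<open>space M = S\<close> by (intro Bochner_Integration.integral_cong) auto
    then show ?thesis using diff by simp
  next
    case 2
    then show ?thesis using pos diff by fastforce
  qed
qed

lemma cone_le_scaled_functional_bounds:
  fixes F :: "('a \<Rightarrow> real) \<Rightarrow> real"
  assumes V: "\<And>t. (\<lambda>x. t * v x) \<in> V" "w \<in> V"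
    and mono: "\<And>u u'. u \<in> V \<Longrightarrow> u' \<in> V \<Longrightarrow> cone_le S C u u' \<Longrightarrow> F u \<le> F u'"
    and hom: "\<And>t. F (\<lambda>x. t * v x) = t * F v"
    and pos: "F v > 0"
  shows "cone_le S C (\<lambda>x. t * v x) w \<Longrightarrow> t \<le> F w / F v"
    and "cone_le S C w (\<lambda>x. s * v x) \<Longrightarrow> F w / F v \<le> s"
  using mono[OF V(1) V(2)] mono[OF V(2) V(1)] hom pos by (simp_all add: field_simps)

lemma hilbert_theta_ratio_le:
  fixes F G :: "('a \<Rightarrow> real) \<Rightarrow> real"
  assumes theta: "hilbert_theta S C v w = ereal \<theta>"
    and V: "\<And>t. (\<lambda>x. t * v x) \<in> V" "w \<in> V"
    and mono: "\<And>u u'. u \<in> V \<Longrightarrow> u' \<in> V \<Longrightarrow> cone_le S C u u' \<Longrightarrow> F u \<le> F u' \<and> G u \<le> G u'"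
    and hom: "\<And>t. F (\<lambda>x. t * v x) = t * F v" "\<And>t. G (\<lambda>x. t * v x) = t * G v"
    and pos: "F v > 0" "F w > 0" "G v > 0" "G w > 0"
  shows "0 \<le> \<theta>" "F v / F w \<le> exp \<theta> * (G v / G w)"
proof -
  define A where "A = {t. t > 0 \<and> cone_le S C (\<lambda>x. t * v x) w}"
  define B where "B = {s. s > 0 \<and> cone_le S C w (\<lambda>x. s * v x)}"
  have ne: "A \<noteq> {}" "B \<noteq> {}" and \<theta>: "\<theta> = ln (Inf B / Sup A)"
    using theta unfolding hilbert_theta_def Let_def A_def B_def by (auto split: if_splits)
  note F_bounds = cone_le_scaled_functional_bounds[OF V, where F=F]
  note G_bounds = cone_le_scaled_functional_bounds[OF V, where F=G]
  have Sup_A: "Sup A \<le> F w / F v"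
    using ne(1) F_bounds(1) mono hom pos unfolding A_def by (intro cSup_least) blast+
  have Inf_B: "G w / G v \<le> Inf B" "F w / F v \<le> Inf B"
    using ne(2) F_bounds(2) G_bounds(2) mono hom pos unfolding B_def by (intro cInf_greatest; blast)+
  have "0 < Sup A"
  proof -
    obtain t where "t \<in> A" using ne(1) by blast
    moreover have "bdd_above A"
      using F_bounds(1) mono hom pos unfolding A_def bdd_above_def by blast
    ultimately show ?thesis using cSup_upper[of t A] unfolding A_def by force
  qed
  have exp_\<theta>: "exp \<theta> = Inf B / Sup A"
  proof -
    have "0 < Inf B"
      using Inf_B(1) pos by (meson divide_pos_pos order.strict_trans2)
    then show ?thesis
      using \<open>0 < Sup A\<close> \<theta> by simp
  qed
  show "0 \<le> \<theta>"
    using \<theta> Sup_A Inf_B(2) \<open>0 < Sup A\<close> by simp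
  have "F v / F w \<le> 1 / Sup A"
    using Sup_A \<open>0 < Sup A\<close> pos by (simp add: field_simps)
  also have "\<dots> \<le> exp \<theta> * (G v / G w)"
    using Inf_B(1) \<open>0 < Sup A\<close> pos by (simp add: exp_\<theta> field_simps)
  finally show "F v / F w \<le> exp \<theta> * (G v / G w)" .
qed

lemma integral_ratio_le_exp_hilbert_theta:
  assumes "finite_measure M"
    and sets: "sets M = sets (restrict_space borel \<gamma>)"
    and "compact \<gamma>" "emeasure M \<gamma> > 0" "0 < \<mu>"
    and \<phi>: "\<forall>\<sigma>\<in>cone_D a \<mu> \<gamma>. (\<integral>x. \<phi> x * \<sigma> x \<partial>M) > 0"
    and \<rho>: "\<rho>1 \<in> cone_D a \<mu> \<gamma>" "\<rho>2 \<in> cone_D a \<mu> \<gamma>"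
    and \<theta>: "hilbert_theta \<gamma> (cone_D a \<mu> \<gamma>) \<rho>1 \<rho>2 = ereal \<theta>"
  shows "0 \<le> \<theta>"
    and "(\<integral>x. \<phi> x * \<rho>1 x \<partial>M) / (\<integral>x. \<phi> x * \<rho>2 x \<partial>M)
      \<le> exp \<theta> * ((\<integral>x. \<rho>1 x \<partial>M) / (\<integral>x. \<rho>2 x \<partial>M))"
proof -
  have space: "space M = \<gamma>"
    using sets_eq_imp_space_eq[OF sets] by (simp add: space_restrict_space)
  have density: "integrable M \<sigma> \<and> integral\<^sup>L M \<sigma> > 0" if "\<sigma> \<in> cone_D a \<mu> \<gamma>" for \<sigma>
    using integral_cone_D_pos[OF assms(1-5) that] .
  have weighted: "integrable M (\<lambda>x. \<phi> x * \<sigma> x) \<and> (\<integral>x. \<phi> x * \<sigma> x \<partial>M) > 0"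
    if "\<sigma> \<in> cone_D a \<mu> \<gamma>" for \<sigma>
    using \<phi> that not_integrable_integral_eq by fastforce
  define V where "V = {u. integrable M (\<lambda>x. \<phi> x * u x) \<and> integrable M u}"
  have V: "(\<lambda>x. t * \<rho>1 x) \<in> V" "\<rho>2 \<in> V" for t
    using density \<rho> weighted unfolding V_def by (auto simp: mult.left_commute)
  have mono: "(\<integral>x. \<phi> x * u x \<partial>M) \<le> (\<integral>x. \<phi> x * u' x \<partial>M) \<and> (\<integral>x. u x \<partial>M) \<le> (\<integral>x. u' x \<partial>M)"
    if "u \<in> V" "u' \<in> V" "cone_le \<gamma> (cone_D a \<mu> \<gamma>) u u'" for u u'
    using integral_mono_cone_le[OF space _ _ _ that(3), where g = \<phi>]
      integral_mono_cone_le[OF space _ _ _ that(3), where g = "\<lambda>_. 1", simplified]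
      that(1,2) density weighted unfolding V_def by blast
  have hom: "(\<integral>x. \<phi> x * (t * \<rho>1 x) \<partial>M) = t * (\<integral>x. \<phi> x * \<rho>1 x \<partial>M)"
    "(\<integral>x. t * \<rho>1 x \<partial>M) = t * (\<integral>x. \<rho>1 x \<partial>M)" for t
    by (simp_all add: mult.left_commute)
  show "0 \<le> \<theta>" "(\<integral>x. \<phi> x * \<rho>1 x \<partial>M) / (\<integral>x. \<phi> x * \<rho>2 x \<partial>M)
      \<le> exp \<theta> * ((\<integral>x. \<rho>1 x \<partial>M) / (\<integral>x. \<rho>2 x \<partial>M))"
    by (rule hilbert_theta_ratio_le[where F = "\<lambda>u. \<integral>x. \<phi> x * u x \<partial>M" and G = "\<lambda>u. \<integral>x. u x \<partial>M",
          OF \<theta> V mono hom]; use density weighted \<rho> in auto)+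
qed

theorem lemma4p3:
  fixes Leaves :: "('a::metric_space) set set"
    and m :: "'a set \<Rightarrow> 'a measure"
    and Q :: "'a set"
    and a \<mu> b :: real
    and \<phi> :: "'a \<Rightarrow> real"
  assumes leaves_Q: "\<Union>Leaves \<subseteq> Q"
    and dist_Q: "\<forall>x\<in>Q. \<forall>y\<in>Q. dist x y \<le> 1"
    and leaf_compact: "\<forall>\<gamma>\<in>Leaves. compact \<gamma>"
    and leaf_space: "\<forall>\<gamma>\<in>Leaves. sets (m \<gamma>) = sets (restrict_space borel \<gamma>)"
    and leaf_finite: "\<forall>\<gamma>\<in>Leaves. finite_measure (m \<gamma>)"
    and leaf_pos: "\<forall>\<gamma>\<in>Leaves. emeasure (m \<gamma>) \<gamma> > 0"
    and a_pos: "a > 0"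
    and mu: "0 < \<mu>" "\<mu> \<le> 1"
    and phi: "\<phi> \<in> class_A Leaves m a \<mu>"
    and b: "b \<ge> 1"
  shows "\<forall>\<gamma>\<in>Leaves. \<forall>\<rho>1\<in>cone_D a \<mu> \<gamma>. \<forall>\<rho>2\<in>cone_D a \<mu> \<gamma>. \<forall>\<theta>::real.
           hilbert_theta \<gamma> (cone_D a \<mu> \<gamma>) \<rho>1 \<rho>2 = ereal \<theta> \<longrightarrow>
           leaf_int m \<gamma> (\<lambda>x. \<phi> x * \<rho>1 x) / leaf_int m \<gamma> (\<lambda>x. \<phi> x * \<rho>2 x)
             \<le> exp (b * \<theta>) * (leaf_int m \<gamma> \<rho>1 / leaf_int m \<gamma> \<rho>2)"
proof (intro ballI allI impI)
  fix \<gamma> \<rho>1 \<rho>2 \<theta>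
  assume \<gamma>: "\<gamma> \<in> Leaves" and \<rho>: "\<rho>1 \<in> cone_D a \<mu> \<gamma>" "\<rho>2 \<in> cone_D a \<mu> \<gamma>"
    and \<theta>: "hilbert_theta \<gamma> (cone_D a \<mu> \<gamma>) \<rho>1 \<rho>2 = ereal \<theta>"
  have \<phi>: "\<forall>\<sigma>\<in>cone_D a \<mu> \<gamma>. (\<integral>x. \<phi> x * \<sigma> x \<partial>m \<gamma>) > 0"
    using phi \<gamma> unfolding class_A_def leaf_int_def by blast
  note leaf = leaf_finite leaf_space leaf_compact leaf_pos
  have "0 \<le> \<theta>" and ratio: "leaf_int m \<gamma> (\<lambda>x. \<phi> x * \<rho>1 x) / leaf_int m \<gamma> (\<lambda>x. \<phi> x * \<rho>2 x)
      \<le> exp \<theta> * (leaf_int m \<gamma> \<rho>1 / leaf_int m \<gamma> \<rho>2)"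
    using integral_ratio_le_exp_hilbert_theta[OF _ _ _ _ mu(1) \<phi> \<rho> \<theta>] leaf \<gamma>
    unfolding leaf_int_def by auto
  have "exp \<theta> \<le> exp (b * \<theta>)"
    using \<open>0 \<le> \<theta>\<close> b by (simp add: mult_le_cancel_right1)
  moreover have "0 \<le> leaf_int m \<gamma> \<rho>1 / leaf_int m \<gamma> \<rho>2"
    using integral_cone_D_pos[OF _ _ _ _ mu(1)] leaf \<gamma> \<rho> unfolding leaf_int_def
    by (meson divide_nonneg_pos less_imp_le)
  ultimately show "leaf_int m \<gamma> (\<lambda>x. \<phi> x * \<rho>1 x) / leaf_int m \<gamma> (\<lambda>x. \<phi> x * \<rho>2 x)
      \<le> exp (b * \<theta>) * (leaf_int m \<gamma> \<rho>1 / leaf_int m \<gamma> \<rho>2)"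
    using ratio mult_right_mono order_trans by blast
qed

end
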